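(* Let $n\ge1$, $\gamma>0$, let $\phi:I\to\mathbb{R}$ be a proper closed convex function on an interval $I$, let $\psi=\phi^*$, and let $\hat X\in\mathcal{U}(\mu,\nu)$ (for some probability vectors $\mu,\nu\in\mathbb{R}^n$) satisfy $\hat X_{ij}\in\operatorname{int}(\operatorname{dom}\phi)$ for all $i,j$. Then the infimum $$\inf_{C\in S_h,\ u,v\in\mathbb{R}^n} E(u,v,C):=\psi\Big(\frac{u\oplus v-C}{\gamma}\Big)-\Big\langle\frac{u\oplus v-C}{\gamma},\hat X\Big\rangle$$ is attained. Moreover, if $(u^*,v^*,C^* )$ is a minimizer and $\psi$ is twice differentiable with $\psi''>0$ at each entry of $(u^*\oplus v^*-C^* )/\gamma$, then the optimal $C^*\in S_h$ is unique.
   Context: $\mathcal{U}(\mu,\nu):=\{X\in\mathbb{R}_+^{n\times n}: X\mathbf{1}=\mu,\ X^\top\mathbf{1}=\nu\}$. $S_h:=\{C\in\mathbb{R}_+^{n\times n}: C=C^\top,\ \operatorname{diag}(C)=0\}$. $\psi:=\phi^*$ is the Fenchel conjugate; for a matrix $Z$, $\psi(Z):=\sum_{i,j}\psi(Z_{ij})$. $(u\oplus v)_{ij}:=u_i+v_j$. *)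

theory Defs
  imports "HOL-Analysis.Analysis"
begin

text \<open>A function phi defined on a set I (extended by +infinity outside I).
  Proper closed convex on an interval: I is a nonempty interval, phi is convex
  on I, and the epigraph of phi is closed.\<close>
definition proper_closed_convex_on :: "real set \<Rightarrow> (real \<Rightarrow> real) \<Rightarrow> bool" where
  "proper_closed_convex_on I phi \<longleftrightarrow>
     is_interval I \<and> I \<noteq> {} \<and> convex_on I phi \<and>
     closed {(x, t). x \<in> I \<and> phi x \<le> t}"

definition fenchel_conj :: "real set \<Rightarrow> (real \<Rightarrow> real) \<Rightarrow> real \<Rightarrow> ereal" where
  "fenchel_conj I phi y = (SUP x\<in>I. ereal (x * y - phi x))"

definition transport_plans :: "('n::finite \<Rightarrow> real) \<Rightarrow> ('n \<Rightarrow> real) \<Rightarrow> ('n \<Rightarrow> 'n \<Rightarrow> real) set" where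
  "transport_plans mu nu = {X. (\<forall>i j. 0 \<le> X i j) \<and> (\<forall>i. (\<Sum>j\<in>UNIV. X i j) = mu i)
                                \<and> (\<forall>j. (\<Sum>i\<in>UNIV. X i j) = nu j)}"

definition hollow_sym :: "('n::finite \<Rightarrow> 'n \<Rightarrow> real) set" where
  "hollow_sym = {C. (\<forall>i j. 0 \<le> C i j) \<and> (\<forall>i j. C i j = C j i) \<and> (\<forall>i. C i i = 0)}"

definition prob_vector :: "('n::finite \<Rightarrow> real) \<Rightarrow> bool" where
  "prob_vector mu \<longleftrightarrow> (\<forall>i. 0 \<le> mu i) \<and> (\<Sum>i\<in>UNIV. mu i) = 1"

definition dual_obj :: "(real \<Rightarrow> ereal) \<Rightarrow> real \<Rightarrow> ('n::finite \<Rightarrow> 'n \<Rightarrow> real)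
    \<Rightarrow> ('n \<Rightarrow> real) \<Rightarrow> ('n \<Rightarrow> real) \<Rightarrow> ('n \<Rightarrow> 'n \<Rightarrow> real) \<Rightarrow> ereal" where
  "dual_obj psi gamma Xh u v C =
     (\<Sum>i\<in>UNIV. \<Sum>j\<in>UNIV. psi ((u i + v j - C i j) / gamma))
     - ereal (\<Sum>i\<in>UNIV. \<Sum>j\<in>UNIV. ((u i + v j - C i j) / gamma) * Xh i j)"

definition twice_diff_pos_at :: "(real \<Rightarrow> ereal) \<Rightarrow> real \<Rightarrow> bool" where
  "twice_diff_pos_at psi z \<longleftrightarrow>
     (\<exists>e>0. \<exists>psi' psi''. (\<forall>y\<in>ball z e. \<bar>psi y\<bar> \<noteq> \<infinity> \<and>
          ((\<lambda>t. real_of_ereal (psi t)) has_real_derivative psi' y) (at y))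
        \<and> (psi' has_real_derivative psi'') (at z) \<and> psi'' > 0)"

end

(*
  The objective depends on (u, v, C) only through Z = (u (+) v - C) / gamma, and since S_h is a
  cone, the attainable Z form the set of matrices u (+) v - C with C in S_h. This set is closed
  under entrywise limits: symmetry and the zero diagonal recover C from W = u (+) v - C as
  C_ij = (W_ii + W_jj - W_ij - W_ji) / 2, and then u and v up to a common shift.

  Existence: since Xh_ij is interior to I, psi z >= Xh_ij z + delta |z| - K, so the objective
  dominates delta |Z|_1 - K, and psi is lower semicontinuous as a supremum of affine functions.
  A minimizing sequence is therefore bounded and any of its limit points is a minimizer.

  Uniqueness: psi is convex, so along the segment between two minimizers the objective stays
  minimal and every entry of psi is affine there. Since psi'' > 0 at the entries of the first
  minimizer, the two Z coincide, and C is then fixed by the formula above.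
*)

theory Submission
  imports Defs
begin

lemma sum_SUP_ereal_le:
  fixes f :: "'s \<Rightarrow> 'a \<Rightarrow> real"
  assumes "finite S" "A \<noteq> {}"
    and "\<And>x. (\<forall>s\<in>S. x s \<in> A) \<Longrightarrow> (\<Sum>s\<in>S. f s (x s)) \<le> B"
  shows "(\<Sum>s\<in>S. SUP a\<in>A. ereal (f s a)) \<le> ereal B"
  using assms
proof (induction S arbitrary: B rule: finite_induct)
  case empty
  then obtain a where "a \<in> A" by blast
  then show ?case using empty.prems(2)[of "\<lambda>_. a"] by simp
next
  case (insert s S)
  have rest_le: "(\<Sum>t\<in>S. SUP a\<in>A. ereal (f t a)) \<le> ereal (B - f s a)" if "a \<in> A" for a
  proof (rule insert.IH[OF insert.prems(1)])
    fix x assume "\<forall>t\<in>S. x t \<in> A"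
    then have "(\<Sum>t\<in>insert s S. f t ((x(s := a)) t)) \<le> B"
      using \<open>a \<in> A\<close> by (intro insert.prems(2)) auto
    moreover have "(\<Sum>t\<in>insert s S. f t ((x(s := a)) t)) = f s a + (\<Sum>t\<in>S. f t (x t))"
      using insert.hyps by (simp add: sum.insert) (rule sum.cong, auto)
    ultimately show "(\<Sum>t\<in>S. f t (x t)) \<le> B - f s a" by simp
  qed
  have rest_not_MInfty: "(\<Sum>t\<in>S. SUP a\<in>A. ereal (f t a)) \<noteq> -\<infinity>"
  proof -
    obtain a0 where "a0 \<in> A" using insert.prems(1) by blast
    then have "ereal (\<Sum>t\<in>S. f t a0) \<le> (\<Sum>t\<in>S. SUP a\<in>A. ereal (f t a))"
      unfolding sum_ereal[symmetric] by (intro sum_mono SUP_upper)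
    then show ?thesis by auto
  qed
  have "(\<Sum>t\<in>insert s S. SUP a\<in>A. ereal (f t a))
      = (SUP a\<in>A. ereal (f s a) + (\<Sum>t\<in>S. SUP a\<in>A. ereal (f t a)))"
    using insert.hyps SUP_ereal_add_left[OF insert.prems(1) rest_not_MInfty] by simp
  also have "\<dots> \<le> ereal B"
  proof (rule SUP_least)
    fix a assume "a \<in> A"
    with rest_le show "ereal (f s a) + (\<Sum>t\<in>S. SUP a\<in>A. ereal (f t a)) \<le> ereal B"
      by (cases "\<Sum>t\<in>S. SUP a\<in>A. ereal (f t a)") (auto simp: algebra_simps)
  qed
  finally show ?case .
qed

lemma double_sum_eq_pair_sum:
  "(\<Sum>i\<in>UNIV. \<Sum>j\<in>UNIV. f i j) = (\<Sum>p\<in>UNIV. case_prod f p)"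
  by (simp add: sum.cartesian_product)

lemma member_le_double_sum:
  fixes f :: "'a::finite \<Rightarrow> 'b::finite \<Rightarrow> real"
  assumes "\<And>i j. 0 \<le> f i j"
  shows "f i j \<le> (\<Sum>i\<in>UNIV. \<Sum>j\<in>UNIV. f i j)"
  unfolding double_sum_eq_pair_sum using assms
  by (intro member_le_sum[of "(i, j)", where f = "case_prod f", simplified]) auto

lemma bounded_fun_seq_convergent_subseq:
  fixes f :: "nat \<Rightarrow> 'a::finite \<Rightarrow> real"
  assumes "\<And>k i. \<bar>f k i\<bar> \<le> B i"
  obtains r g where "strict_mono r" "\<And>i. (\<lambda>k. f (r k) i) \<longlonglongrightarrow> g i"
proof -
  define P where "P = (\<lambda>k. \<chi> i. f k i)"
  have "norm (P k) \<le> (\<Sum>i\<in>UNIV. B i)" for k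
    using norm_le_l1_cart[of "P k"] sum_mono[of UNIV "\<lambda>i. \<bar>P k $ i\<bar>" B] assms
    unfolding P_def by simp
  then have "bounded (range P)" unfolding bounded_iff by blast
  then obtain l r where "strict_mono r" "(P \<circ> r) \<longlonglongrightarrow> l"
    using bounded_imp_convergent_subsequence by blast
  moreover have "(\<lambda>k. f (r k) i) \<longlonglongrightarrow> l $ i" for i
    using tendsto_vec_nth[OF \<open>(P \<circ> r) \<longlonglongrightarrow> l\<close>, of i] unfolding P_def by (simp add: o_def)
  ultimately show thesis using that by blast
qed

definition entrywise_seq_closed :: "('a \<Rightarrow> 'b \<Rightarrow> real) set \<Rightarrow> bool" where
  "entrywise_seq_closed S \<longleftrightarrow>
     (\<forall>Zs Z. (\<forall>k. Zs k \<in> S) \<and> (\<forall>i j. (\<lambda>k. Zs k i j) \<longlonglongrightarrow> Z i j) \<longrightarrow> Z \<in> S)"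

lemma entrywise_seq_closedD:
  "entrywise_seq_closed S \<Longrightarrow> (\<And>k. Zs k \<in> S) \<Longrightarrow> (\<And>i j. (\<lambda>k. Zs k i j) \<longlonglongrightarrow> Z i j) \<Longrightarrow> Z \<in> S"
  unfolding entrywise_seq_closed_def by blast

lemma has_real_derivative_eq_right_slope:
  assumes "(f has_real_derivative D) (at x)" "e > 0"
    and "\<And>y. x \<le> y \<Longrightarrow> y \<le> x + e \<Longrightarrow> f y = f x + (y - x) * c"
  shows "D = c"
proof (rule has_field_derivative_unique)
  show "(f has_real_derivative D) (at x within {x..x + e})"
    using assms(1) by (rule has_field_derivative_at_within)
  have "((\<lambda>y. f x + (y - x) * c) has_real_derivative c) (at x within {x..x + e})"
    by (auto intro!: derivative_eq_intros)
  then show "(f has_real_derivative c) (at x within {x..x + e})"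
    by (rule has_field_derivative_transform_within[OF _ \<open>e > 0\<close>])
      (use \<open>e > 0\<close> assms(3)[symmetric] in auto)
  show "at x within {x..x + e} \<noteq> bot"
    using \<open>e > 0\<close> by (simp add: at_within_Icc_at_right)
qed

text \<open>Affinity along the segment makes psi' constant on a one-sided neighbourhood of a,
  which forces psi''(a) = 0.\<close>

lemma twice_diff_pos_at_not_affine:
  assumes "twice_diff_pos_at psi a" "d \<noteq> 0"
    and affine: "\<And>t. 0 \<le> t \<Longrightarrow> t \<le> 1 \<Longrightarrow>
      real_of_ereal (psi (a + t * d)) = real_of_ereal (psi a) + t * c"
  shows False
proof -
  define g where "g = (\<lambda>y. real_of_ereal (psi y))"
  obtain e g' g'' where "e > 0" and g': "\<And>y. y \<in> ball a e \<Longrightarrow> (g has_real_derivative g' y) (at y)"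
    and g'': "(g' has_real_derivative g'') (at a)" and "g'' > 0"
    using assms(1) unfolding twice_diff_pos_at_def g_def by blast
  define e' where "e' = min 1 (e / \<bar>d\<bar>) / 2"
  have "e' > 0" using \<open>e > 0\<close> \<open>d \<noteq> 0\<close> unfolding e'_def by simp
  have slope: "g' (a + s * d) * d = c" if "0 \<le> s" "s \<le> e'" for s
  proof (rule has_real_derivative_eq_right_slope)
    have "\<bar>s * d\<bar> < e"
      using that \<open>e > 0\<close> \<open>d \<noteq> 0\<close> unfolding e'_def by (auto simp: abs_mult field_simps)
    then have "a + s * d \<in> ball a e" by (simp add: dist_real_def)
    moreover have "((\<lambda>s. a + s * d) has_real_derivative d) (at s)"
      by (auto intro!: derivative_eq_intros)
    ultimately show "((\<lambda>s. g (a + s * d)) has_real_derivative g' (a + s * d) * d) (at s)"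
      using DERIV_chain2[of g "g' (a + s * d)" "\<lambda>s. a + s * d" s d] g' by simp
    show "1 - s > 0" using that unfolding e'_def by simp
    show "g (a + y * d) = g (a + s * d) + (y - s) * c" if "s \<le> y" "y \<le> s + (1 - s)" for y
      using affine[of y] affine[of s] that \<open>0 \<le> s\<close> unfolding g_def by (simp add: algebra_simps)
  qed
  have "g'' * d = 0"
  proof (rule has_real_derivative_eq_right_slope[where x = 0])
    show "((\<lambda>s. g' (a + s * d)) has_real_derivative g'' * d) (at 0)"
    proof -
      have "((\<lambda>s. a + s * d) has_real_derivative d) (at 0)"
        by (auto intro!: derivative_eq_intros)
      then show ?thesis using DERIV_chain2[of g' g'' "\<lambda>s. a + s * d" 0 d] g'' by simp
    qed
    show "g' (a + y * d) = g' (a + 0 * d) + (y - 0) * 0" if "0 \<le> y" "y \<le> 0 + e'" for y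
    proof -
      have "g' (a + y * d) * d = g' (a + 0 * d) * d"
        using slope[of y] slope[of 0] that \<open>e' > 0\<close> by simp
      then show ?thesis using \<open>d \<noteq> 0\<close> by simp
    qed
  qed fact
  then show False using \<open>g'' > 0\<close> \<open>d \<noteq> 0\<close> by simp
qed

section \<open>Fenchel conjugates\<close>

lemma fenchel_conj_ge:
  "x \<in> I \<Longrightarrow> ereal (x * y - phi x) \<le> fenchel_conj I phi y"
  unfolding fenchel_conj_def by (rule SUP_upper)

lemma fenchel_conj_not_MInfty:
  assumes "I \<noteq> {}"
  shows "fenchel_conj I phi y \<noteq> -\<infinity>"
proof -
  obtain x where "x \<in> I" using assms by blast
  from fenchel_conj_ge[OF this, of y phi] show ?thesis by auto
qed

lemma fenchel_conj_coercive:
  assumes "x \<in> interior I"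
  shows "\<exists>\<delta>>0. \<exists>K. \<forall>z. ereal (x * z + \<delta> * \<bar>z\<bar> - K) \<le> fenchel_conj I phi z"
proof -
  obtain e where "e > 0" "ball x e \<subseteq> I" using assms mem_interior by blast
  define \<delta> where "\<delta> = e / 2"
  have I: "x + \<delta> \<in> I" "x - \<delta> \<in> I"
    using \<open>e > 0\<close> \<open>ball x e \<subseteq> I\<close> unfolding \<delta>_def by (auto simp: dist_real_def)
  define K where "K = max (phi (x + \<delta>)) (phi (x - \<delta>))"
  have "ereal (x * z + \<delta> * \<bar>z\<bar> - K) \<le> fenchel_conj I phi z" for z
  proof (cases "z \<ge> 0")
    case True
    then have "x * z + \<delta> * \<bar>z\<bar> - K \<le> (x + \<delta>) * z - phi (x + \<delta>)"
      unfolding K_def by (auto simp: algebra_simps)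
    then show ?thesis using fenchel_conj_ge[OF I(1), of z phi] by (meson ereal_less_eq(3) order_trans)
  next
    case False
    then have "x * z + \<delta> * \<bar>z\<bar> - K \<le> (x - \<delta>) * z - phi (x - \<delta>)"
      unfolding K_def by (auto simp: algebra_simps)
    then show ?thesis using fenchel_conj_ge[OF I(2), of z phi] by (meson ereal_less_eq(3) order_trans)
  qed
  moreover have "\<delta> > 0" using \<open>e > 0\<close> unfolding \<delta>_def by simp
  ultimately show ?thesis by blast
qed

lemma fenchel_conj_convex:
  assumes "fenchel_conj I phi a = ereal fa" "fenchel_conj I phi b = ereal fb" "0 \<le> t" "t \<le> 1"
  shows "fenchel_conj I phi ((1 - t) * a + t * b) \<le> ereal ((1 - t) * fa + t * fb)"
  unfolding fenchel_conj_def
proof (rule SUP_least)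
  fix x assume "x \<in> I"
  then have "x * a - phi x \<le> fa" "x * b - phi x \<le> fb"
    using fenchel_conj_ge[of x I a phi] fenchel_conj_ge[of x I b phi] assms(1,2) by auto
  then have "(1 - t) * (x * a - phi x) + t * (x * b - phi x) \<le> (1 - t) * fa + t * fb"
    using assms(3,4) by (intro add_mono mult_left_mono) auto
  then show "ereal (x * ((1 - t) * a + t * b) - phi x) \<le> ereal ((1 - t) * fa + t * fb)"
    by (simp add: algebra_simps)
qed

section \<open>Minimizing psi(Z) - <Z, Xh> over an entrywise closed set\<close>

definition reduced_dual_obj :: "(real \<Rightarrow> ereal) \<Rightarrow> ('n::finite \<Rightarrow> 'n \<Rightarrow> real) \<Rightarrow> ('n \<Rightarrow> 'n \<Rightarrow> real) \<Rightarrow> ereal" where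
  "reduced_dual_obj psi Xh Z =
     (\<Sum>i\<in>UNIV. \<Sum>j\<in>UNIV. psi (Z i j)) - ereal (\<Sum>i\<in>UNIV. \<Sum>j\<in>UNIV. Z i j * Xh i j)"

lemma dual_obj_eq_reduced_dual_obj:
  "dual_obj psi gamma Xh u v C = reduced_dual_obj psi Xh (\<lambda>i j. (u i + v j - C i j) / gamma)"
  unfolding dual_obj_def reduced_dual_obj_def ..

lemma reduced_dual_obj_finite:
  assumes "\<And>i j. \<bar>psi (Z i j)\<bar> \<noteq> \<infinity>"
  shows "reduced_dual_obj psi Xh Z = ereal ((\<Sum>i\<in>UNIV. \<Sum>j\<in>UNIV. real_of_ereal (psi (Z i j)))
    - (\<Sum>i\<in>UNIV. \<Sum>j\<in>UNIV. Z i j * Xh i j))"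
proof -
  have "(\<Sum>i\<in>UNIV. \<Sum>j\<in>UNIV. psi (Z i j)) = (\<Sum>i\<in>UNIV. \<Sum>j\<in>UNIV. ereal (real_of_ereal (psi (Z i j))))"
    by (intro sum.cong refl) (simp add: ereal_real' assms)
  then show ?thesis unfolding reduced_dual_obj_def by simp
qed

lemma reduced_dual_obj_entries_finite:
  assumes "\<And>y. psi y \<noteq> -\<infinity>" "reduced_dual_obj psi Xh Z \<noteq> \<infinity>"
  shows "\<bar>psi (Z i j)\<bar> \<noteq> \<infinity>"
proof
  assume "\<bar>psi (Z i j)\<bar> = \<infinity>"
  with assms(1) have "psi (Z i j) = \<infinity>" by auto
  then have "(\<Sum>i\<in>UNIV. \<Sum>j\<in>UNIV. psi (Z i j)) = \<infinity>" by (auto simp: sum_Pinfty)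
  with assms(2) show False unfolding reduced_dual_obj_def by simp
qed

lemma reduced_dual_obj_coercive:
  fixes Xh :: "'n::finite \<Rightarrow> 'n \<Rightarrow> real"
  assumes "\<forall>i j. Xh i j \<in> interior I"
  obtains \<delta> K where "\<And>i j. \<delta> i j > 0"
    and "\<And>Z. ereal ((\<Sum>i\<in>UNIV. \<Sum>j\<in>UNIV. \<delta> i j * \<bar>Z i j\<bar>) - K) \<le> reduced_dual_obj (fenchel_conj I phi) Xh Z"
proof -
  obtain \<delta> K where \<delta>: "\<And>i j. \<delta> i j > 0"
    and bound: "\<And>i j z. ereal (Xh i j * z + \<delta> i j * \<bar>z\<bar> - K i j) \<le> fenchel_conj I phi z"
    using fenchel_conj_coercive[of "Xh _ _" I phi] assms by metis
  have "ereal ((\<Sum>i\<in>UNIV. \<Sum>j\<in>UNIV. \<delta> i j * \<bar>Z i j\<bar>) - (\<Sum>i\<in>UNIV. \<Sum>j\<in>UNIV. K i j))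
      \<le> reduced_dual_obj (fenchel_conj I phi) Xh Z" for Z
  proof -
    have "ereal (\<Sum>i\<in>UNIV. \<Sum>j\<in>UNIV. Xh i j * Z i j + \<delta> i j * \<bar>Z i j\<bar> - K i j)
        \<le> (\<Sum>i\<in>UNIV. \<Sum>j\<in>UNIV. fenchel_conj I phi (Z i j))"
      unfolding sum_ereal[symmetric] by (intro sum_mono bound)
    moreover have "(\<Sum>i\<in>UNIV. \<Sum>j\<in>UNIV. Xh i j * Z i j + \<delta> i j * \<bar>Z i j\<bar> - K i j)
        = ((\<Sum>i\<in>UNIV. \<Sum>j\<in>UNIV. \<delta> i j * \<bar>Z i j\<bar>) - (\<Sum>i\<in>UNIV. \<Sum>j\<in>UNIV. K i j))
          + (\<Sum>i\<in>UNIV. \<Sum>j\<in>UNIV. Z i j * Xh i j)"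
      by (simp add: sum.distrib sum_subtractf mult.commute)
    ultimately show ?thesis
      unfolding reduced_dual_obj_def by (simp add: ereal_le_minus)
  qed
  with \<delta> show thesis using that by blast
qed

lemma reduced_dual_obj_lsc:
  fixes Zs :: "nat \<Rightarrow> 'n::finite \<Rightarrow> 'n \<Rightarrow> real"
  assumes "I \<noteq> {}" "\<And>i j. (\<lambda>k. Zs k i j) \<longlonglongrightarrow> Z i j" "c \<longlonglongrightarrow> c0"
    and "\<And>k. reduced_dual_obj (fenchel_conj I phi) Xh (Zs k) \<le> ereal (c k)"
  shows "reduced_dual_obj (fenchel_conj I phi) Xh Z \<le> ereal c0"
proof -
  define L where "L = (\<lambda>Z. \<Sum>i\<in>UNIV. \<Sum>j\<in>UNIV. Z i j * Xh i j)"
  have "(\<Sum>p\<in>UNIV. SUP x\<in>I. ereal (x * case_prod Z p - phi x)) \<le> ereal (c0 + L Z)"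
  proof (rule sum_SUP_ereal_le[OF finite assms(1)])
    fix x :: "'n \<times> 'n \<Rightarrow> real" assume x: "\<forall>p\<in>UNIV. x p \<in> I"
    define S where "S = (\<lambda>Z. \<Sum>i\<in>UNIV. \<Sum>j\<in>UNIV. x (i, j) * Z i j - phi (x (i, j)))"
    have "S (Zs k) \<le> c k + L (Zs k)" for k
    proof -
      have "ereal (S (Zs k)) \<le> (\<Sum>i\<in>UNIV. \<Sum>j\<in>UNIV. fenchel_conj I phi (Zs k i j))"
        unfolding S_def sum_ereal[symmetric] using x by (intro sum_mono fenchel_conj_ge) auto
      also have "\<dots> \<le> ereal (c k + L (Zs k))"
        using assms(4)[of k] unfolding reduced_dual_obj_def L_def by (simp add: ereal_minus_le)
      finally show ?thesis by simp
    qed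
    moreover have "(\<lambda>k. S (Zs k)) \<longlonglongrightarrow> S Z" "(\<lambda>k. c k + L (Zs k)) \<longlonglongrightarrow> c0 + L Z"
      unfolding S_def L_def by (intro tendsto_intros assms(2,3))+
    ultimately have "S Z \<le> c0 + L Z" by (intro LIMSEQ_le) auto
    then show "(\<Sum>p\<in>UNIV. x p * case_prod Z p - phi (x p)) \<le> c0 + L Z"
      unfolding S_def double_sum_eq_pair_sum by (simp add: case_prod_beta)
  qed
  moreover have "(\<Sum>i\<in>UNIV. \<Sum>j\<in>UNIV. fenchel_conj I phi (Z i j))
      = (\<Sum>p\<in>UNIV. SUP x\<in>I. ereal (x * case_prod Z p - phi x))"
    unfolding double_sum_eq_pair_sum fenchel_conj_def by (simp add: case_prod_beta)
  ultimately show ?thesis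
    unfolding reduced_dual_obj_def L_def by (simp add: ereal_minus_le)
qed

lemma reduced_dual_obj_bounds:
  fixes Xh :: "'n::finite \<Rightarrow> 'n \<Rightarrow> real"
  assumes "\<forall>i j. Xh i j \<in> interior I"
  obtains \<delta> K where "\<And>i j. \<delta> i j > 0" "\<And>Z. ereal (- K) \<le> reduced_dual_obj (fenchel_conj I phi) Xh Z"
    and "\<And>Z c i j. reduced_dual_obj (fenchel_conj I phi) Xh Z \<le> ereal c \<Longrightarrow> \<bar>Z i j\<bar> \<le> (c + K) / \<delta> i j"
proof -
  obtain \<delta> K where \<delta>: "\<And>i j. \<delta> i j > 0"
    and lower: "\<And>Z. ereal ((\<Sum>i\<in>UNIV. \<Sum>j\<in>UNIV. \<delta> i j * \<bar>Z i j\<bar>) - K) \<le> reduced_dual_obj (fenchel_conj I phi) Xh Z"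
    using reduced_dual_obj_coercive[OF assms] by blast
  have weighted_le: "\<delta> i j * \<bar>Z i j\<bar> \<le> (\<Sum>i\<in>UNIV. \<Sum>j\<in>UNIV. \<delta> i j * \<bar>Z i j\<bar>)" for Z i j
    using \<delta> by (intro member_le_double_sum) (simp add: less_imp_le)
  have "ereal (- K) \<le> reduced_dual_obj (fenchel_conj I phi) Xh Z" for Z
  proof -
    have "0 \<le> (\<Sum>i\<in>UNIV. \<Sum>j\<in>UNIV. \<delta> i j * \<bar>Z i j\<bar>)"
      using \<delta> by (intro sum_nonneg) (simp add: less_imp_le)
    then have "ereal (- K) \<le> ereal ((\<Sum>i\<in>UNIV. \<Sum>j\<in>UNIV. \<delta> i j * \<bar>Z i j\<bar>) - K)" by simp
    then show ?thesis using lower[of Z] by (rule order_trans)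
  qed
  moreover have "\<bar>Z i j\<bar> \<le> (c + K) / \<delta> i j"
    if "reduced_dual_obj (fenchel_conj I phi) Xh Z \<le> ereal c" for Z c i j
  proof -
    have "\<delta> i j * \<bar>Z i j\<bar> - K \<le> c"
      using order_trans[OF lower that] weighted_le[of i j Z] by simp
    then show ?thesis using \<delta>[of i j] by (simp add: pos_le_divide_eq mult.commute)
  qed
  ultimately show thesis using that \<delta> by blast
qed

lemma reduced_dual_obj_le_of_minimizing_seq:
  fixes S :: "('n::finite \<Rightarrow> 'n \<Rightarrow> real) set"
  assumes "I \<noteq> {}"
    and "entrywise_seq_closed S"
    and "\<And>k. Zs k \<in> S" "\<And>k i j. \<bar>Zs k i j\<bar> \<le> B i j"
    and "\<And>k. reduced_dual_obj (fenchel_conj I phi) Xh (Zs k) \<le> ereal (r + inverse (real (Suc k)))"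
  shows "\<exists>Z\<in>S. reduced_dual_obj (fenchel_conj I phi) Xh Z \<le> ereal r"
proof -
  obtain \<rho> Zp where "strict_mono \<rho>" and Zp: "\<And>p. (\<lambda>k. case_prod (Zs (\<rho> k)) p) \<longlonglongrightarrow> Zp p"
    using bounded_fun_seq_convergent_subseq[of "\<lambda>k. case_prod (Zs k)" "case_prod B"] assms(4)
    by (metis case_prod_beta)
  define Z where "Z = (\<lambda>i j. Zp (i, j))"
  have conv: "(\<lambda>k. Zs (\<rho> k) i j) \<longlonglongrightarrow> Z i j" for i j
    using Zp[of "(i, j)"] unfolding Z_def by simp
  have "(\<lambda>k. r + inverse (real (Suc (\<rho> k)))) \<longlonglongrightarrow> r + 0"
    using LIMSEQ_subseq_LIMSEQ[OF LIMSEQ_inverse_real_of_nat \<open>strict_mono \<rho>\<close>]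
    by (intro tendsto_add tendsto_const) (simp add: o_def)
  then have "reduced_dual_obj (fenchel_conj I phi) Xh Z \<le> ereal r"
    using assms(5) by (intro reduced_dual_obj_lsc[OF \<open>I \<noteq> {}\<close> conv]) auto
  moreover have "Z \<in> S" using \<open>entrywise_seq_closed S\<close> assms(3) conv by (rule entrywise_seq_closedD)
  ultimately show ?thesis by blast
qed

lemma reduced_dual_obj_attains_min:
  fixes S :: "('n::finite \<Rightarrow> 'n \<Rightarrow> real) set"
  assumes "\<forall>i j. Xh i j \<in> interior I" "S \<noteq> {}"
    and "entrywise_seq_closed S"
  shows "\<exists>Z\<in>S. \<forall>Y\<in>S. reduced_dual_obj (fenchel_conj I phi) Xh Z \<le> reduced_dual_obj (fenchel_conj I phi) Xh Y"
proof -
  let ?G = "reduced_dual_obj (fenchel_conj I phi) Xh"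
  have "I \<noteq> {}" using assms(1) interior_subset by blast
  obtain \<delta> K where "\<And>i j. \<delta> i j > 0" and lower: "\<And>Z. ereal (- K) \<le> ?G Z"
    and bounded: "\<And>Z c i j. ?G Z \<le> ereal c \<Longrightarrow> \<bar>Z i j\<bar> \<le> (c + K) / \<delta> i j"
    using reduced_dual_obj_bounds[OF assms(1), where phi = phi] by blast
  define m where "m = (INF Z\<in>S. ?G Z)"
  have m_le: "m \<le> ?G Y" if "Y \<in> S" for Y
    unfolding m_def using that by (rule INF_lower)
  show ?thesis
  proof (cases "m = \<infinity>")
    case True
    obtain Z where "Z \<in> S" using \<open>S \<noteq> {}\<close> by blast
    moreover have "?G Y = \<infinity>" if "Y \<in> S" for Y using m_le[OF that] True by simp
    ultimately show ?thesis by auto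
  next
    case False
    moreover have "ereal (- K) \<le> m" unfolding m_def by (intro INF_greatest lower)
    ultimately obtain r where r: "m = ereal r" by (cases m) auto
    have "\<exists>Z\<in>S. ?G Z < ereal (r + inverse (real (Suc k)))" for k
      using r unfolding m_def by (simp add: INF_less_iff[symmetric])
    then obtain Zs where Zs: "\<And>k. Zs k \<in> S" "\<And>k. ?G (Zs k) < ereal (r + inverse (real (Suc k)))"
      by metis
    have "\<exists>Z\<in>S. ?G Z \<le> ereal r"
    proof (rule reduced_dual_obj_le_of_minimizing_seq[OF \<open>I \<noteq> {}\<close> assms(3)])
      show "Zs k \<in> S" for k by (rule Zs(1))
      show "?G (Zs k) \<le> ereal (r + inverse (real (Suc k)))" for k
        using Zs(2)[of k] by (rule less_imp_le)
      have "?G (Zs k) \<le> ereal (r + 1)" for k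
        using Zs(2)[of k] by (rule order.strict_implies_order[THEN order_trans]) (simp add: inverse_le_1_iff)
      then show "\<bar>Zs k i j\<bar> \<le> (r + 1 + K) / \<delta> i j" for k i j by (rule bounded)
    qed
    then obtain Z where "Z \<in> S" "?G Z \<le> ereal r" by blast
    with m_le r show ?thesis by (metis order_trans)
  qed
qed

lemma reduced_dual_obj_affine_on_segment:
  fixes I :: "real set" and phi :: "real \<Rightarrow> real" and Xh Z Z' :: "'n::finite \<Rightarrow> 'n \<Rightarrow> real"
  defines "g \<equiv> \<lambda>y. real_of_ereal (fenchel_conj I phi y)"
    and "G \<equiv> reduced_dual_obj (fenchel_conj I phi) Xh"
  assumes "I \<noteq> {}" "\<And>i j. \<bar>fenchel_conj I phi (Z i j)\<bar> \<noteq> \<infinity>" "\<And>i j. \<bar>fenchel_conj I phi (Z' i j)\<bar> \<noteq> \<infinity>"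
    and "G Z' = G Z" "G Z \<le> G (\<lambda>i j. (1 - t) * Z i j + t * Z' i j)" "0 \<le> t" "t \<le> 1"
  shows "g ((1 - t) * Z i j + t * Z' i j) = (1 - t) * g (Z i j) + t * g (Z' i j)"
proof -
  define Zt where "Zt = (\<lambda>i j. (1 - t) * Z i j + t * Z' i j)"
  define gap where "gap = (\<lambda>i j. (1 - t) * g (Z i j) + t * g (Z' i j) - g (Zt i j))"
  define L where "L = (\<lambda>Y. \<Sum>i\<in>UNIV. \<Sum>j\<in>UNIV. Y i j * Xh i j)"
  have conv: "fenchel_conj I phi (Zt k l) \<le> ereal ((1 - t) * g (Z k l) + t * g (Z' k l))" for k l
    unfolding Zt_def g_def using assms(4,5) \<open>0 \<le> t\<close> \<open>t \<le> 1\<close>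
    by (intro fenchel_conj_convex) (auto simp: ereal_real')
  have fin: "\<bar>fenchel_conj I phi (Zt k l)\<bar> \<noteq> \<infinity>" for k l
    using conv[of k l] fenchel_conj_not_MInfty[OF \<open>I \<noteq> {}\<close>] by auto
  have gap_nonneg: "0 \<le> gap k l" for k l
    using conv[of k l] fin[of k l] unfolding gap_def g_def by (cases "fenchel_conj I phi (Zt k l)") auto
  have G_values: "G Z = ereal ((\<Sum>k\<in>UNIV. \<Sum>l\<in>UNIV. g (Z k l)) - L Z)"
    "G Z' = ereal ((\<Sum>k\<in>UNIV. \<Sum>l\<in>UNIV. g (Z' k l)) - L Z')"
    "G Zt = ereal ((\<Sum>k\<in>UNIV. \<Sum>l\<in>UNIV. g (Zt k l)) - L Zt)"
    unfolding G_def g_def L_def by (intro reduced_dual_obj_finite assms(4,5) fin)+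
  have L_Zt: "L Zt = (1 - t) * L Z + t * L Z'"
    unfolding L_def Zt_def by (simp add: distrib_right sum.distrib sum_distrib_left mult.assoc)
  have sum_g_Z': "(\<Sum>k\<in>UNIV. \<Sum>l\<in>UNIV. g (Z' k l)) = (\<Sum>k\<in>UNIV. \<Sum>l\<in>UNIV. g (Z k l)) - L Z + L Z'"
    using G_values(1,2) assms(6) by simp
  have "(\<Sum>k\<in>UNIV. \<Sum>l\<in>UNIV. gap k l) = (1 - t) * (\<Sum>k\<in>UNIV. \<Sum>l\<in>UNIV. g (Z k l))
      + t * (\<Sum>k\<in>UNIV. \<Sum>l\<in>UNIV. g (Z' k l)) - (\<Sum>k\<in>UNIV. \<Sum>l\<in>UNIV. g (Zt k l))"
    unfolding gap_def by (simp add: sum.distrib sum_subtractf sum_distrib_left)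
  also have "\<dots> = ((\<Sum>k\<in>UNIV. \<Sum>l\<in>UNIV. g (Z k l)) - L Z) + L Zt - (\<Sum>k\<in>UNIV. \<Sum>l\<in>UNIV. g (Zt k l))"
    unfolding sum_g_Z' L_Zt by (simp add: algebra_simps)
  also have "\<dots> \<le> 0"
    using G_values(1,3) assms(7) unfolding Zt_def[symmetric] by simp
  finally have "(\<Sum>k\<in>UNIV. \<Sum>l\<in>UNIV. gap k l) \<le> 0" .
  moreover have "gap i j \<le> (\<Sum>k\<in>UNIV. \<Sum>l\<in>UNIV. gap k l)"
    using gap_nonneg by (rule member_le_double_sum)
  ultimately show ?thesis using gap_nonneg[of i j] unfolding gap_def Zt_def by simp
qed

lemma reduced_dual_obj_minimizer_unique:
  fixes Z Z' :: "'n::finite \<Rightarrow> 'n \<Rightarrow> real"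
  assumes "I \<noteq> {}"
    and segment: "\<And>t. 0 \<le> t \<Longrightarrow> t \<le> 1 \<Longrightarrow> (\<lambda>i j. (1 - t) * Z i j + t * Z' i j) \<in> S"
    and min: "\<forall>Y\<in>S. reduced_dual_obj (fenchel_conj I phi) Xh Z \<le> reduced_dual_obj (fenchel_conj I phi) Xh Y"
    and min': "\<forall>Y\<in>S. reduced_dual_obj (fenchel_conj I phi) Xh Z' \<le> reduced_dual_obj (fenchel_conj I phi) Xh Y"
    and twice_diff: "\<forall>i j. twice_diff_pos_at (fenchel_conj I phi) (Z i j)"
  shows "Z' = Z"
proof -
  let ?G = "reduced_dual_obj (fenchel_conj I phi) Xh"
  let ?g = "\<lambda>y. real_of_ereal (fenchel_conj I phi y)"
  have "Z \<in> S" "Z' \<in> S" using segment[of 0] segment[of 1] by simp_all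
  then have same_value: "?G Z' = ?G Z"
    using min min' by (intro antisym) auto
  have fin: "\<bar>fenchel_conj I phi (Z i j)\<bar> \<noteq> \<infinity>" for i j
    using twice_diff unfolding twice_diff_pos_at_def by (metis centre_in_ball)
  then have "?G Z' \<noteq> \<infinity>" unfolding same_value by (simp add: reduced_dual_obj_finite)
  then have fin': "\<bar>fenchel_conj I phi (Z' i j)\<bar> \<noteq> \<infinity>" for i j
    by (rule reduced_dual_obj_entries_finite[rotated]) (rule fenchel_conj_not_MInfty[OF \<open>I \<noteq> {}\<close>])
  show ?thesis
  proof (intro ext, rule ccontr)
    fix i j assume "Z' i j \<noteq> Z i j"
    show False
    proof (rule twice_diff_pos_at_not_affine)
      show "twice_diff_pos_at (fenchel_conj I phi) (Z i j)" using twice_diff by blast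
      show "Z' i j - Z i j \<noteq> 0" using \<open>Z' i j \<noteq> Z i j\<close> by simp
      fix t :: real assume t: "0 \<le> t" "t \<le> 1"
      have "?G Z \<le> ?G (\<lambda>i j. (1 - t) * Z i j + t * Z' i j)"
        using min segment[OF t] by blast
      then have "?g ((1 - t) * Z i j + t * Z' i j) = (1 - t) * ?g (Z i j) + t * ?g (Z' i j)"
        by (rule reduced_dual_obj_affine_on_segment[OF \<open>I \<noteq> {}\<close> fin fin' same_value _ t])
      then show "?g (Z i j + t * (Z' i j - Z i j)) = ?g (Z i j) + t * (?g (Z' i j) - ?g (Z i j))"
        by (simp add: algebra_simps)
    qed
  qed
qed

section \<open>Dual potentials\<close>

definition dual_potentials :: "('n::finite \<Rightarrow> 'n \<Rightarrow> real) set" where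
  "dual_potentials = {\<lambda>i j. u i + v j - C i j | u v C. C \<in> hollow_sym}"

lemma dual_potentialsI:
  "C \<in> hollow_sym \<Longrightarrow> W = (\<lambda>i j. u i + v j - C i j) \<Longrightarrow> W \<in> dual_potentials"
  unfolding dual_potentials_def by blast

lemma dual_potentials_nonempty: "dual_potentials \<noteq> {}"
  using dual_potentialsI[of "\<lambda>_ _. 0" "\<lambda>_ _. 0" "\<lambda>_. 0" "\<lambda>_. 0"] unfolding hollow_sym_def by auto

definition hollow_part :: "('n \<Rightarrow> 'n \<Rightarrow> real) \<Rightarrow> 'n \<Rightarrow> 'n \<Rightarrow> real" where
  "hollow_part W i j = (W i i + W j j - W i j - W j i) / 2"

lemma hollow_part_potential:
  assumes "C \<in> hollow_sym"
  shows "hollow_part (\<lambda>i j. u i + v j - C i j) = C"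
  using assms unfolding hollow_sym_def hollow_part_def by (auto simp: fun_eq_iff)

lemma dual_potentials_iff:
  "W \<in> dual_potentials \<longleftrightarrow> hollow_part W \<in> hollow_sym \<and>
     (\<forall>i j. W i j = (W i l + hollow_part W i l - W l l) + (W l j + hollow_part W l j) - hollow_part W i j)"
proof
  assume "W \<in> dual_potentials"
  then obtain u v C where C: "C \<in> hollow_sym" and W: "W = (\<lambda>i j. u i + v j - C i j)"
    unfolding dual_potentials_def by blast
  have eq: "\<forall>i j. W i j = (W i l + C i l - W l l) + (W l j + C l j) - C i j"
  proof -
    have "C l l = 0" using C unfolding hollow_sym_def by auto
    then show ?thesis unfolding W by simp
  qed
  have hollow_part_W: "hollow_part W = C" unfolding W using C by (rule hollow_part_potential)
  show "hollow_part W \<in> hollow_sym \<and>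
     (\<forall>i j. W i j = (W i l + hollow_part W i l - W l l) + (W l j + hollow_part W l j) - hollow_part W i j)"
    unfolding hollow_part_W using C eq by (rule conjI)
next
  assume H: "hollow_part W \<in> hollow_sym \<and>
     (\<forall>i j. W i j = (W i l + hollow_part W i l - W l l) + (W l j + hollow_part W l j) - hollow_part W i j)"
  show "W \<in> dual_potentials"
  proof (rule dual_potentialsI[where u = "\<lambda>i. W i l + hollow_part W i l - W l l"
        and v = "\<lambda>j. W l j + hollow_part W l j"])
    show "hollow_part W \<in> hollow_sym" using H by blast
    show "W = (\<lambda>i j. (W i l + hollow_part W i l - W l l) + (W l j + hollow_part W l j) - hollow_part W i j)"
      by (intro ext) (rule H[THEN conjunct2, rule_format])
  qed
qed

lemma dual_potentials_closed: "entrywise_seq_closed (dual_potentials :: ('n::finite \<Rightarrow> 'n \<Rightarrow> real) set)"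
  unfolding entrywise_seq_closed_def
proof (intro allI impI, elim conjE)
  fix Ws and W :: "'n \<Rightarrow> 'n \<Rightarrow> real" and l :: 'n
  assume Ws: "\<forall>k. Ws k \<in> dual_potentials" and conv: "\<forall>i j. (\<lambda>k. Ws k i j) \<longlonglongrightarrow> W i j"
  have hollow_conv: "(\<lambda>k. hollow_part (Ws k) i j) \<longlonglongrightarrow> hollow_part W i j" for i j
    unfolding hollow_part_def by (auto intro!: tendsto_intros conv[rule_format])
  have "0 \<le> hollow_part W i j" for i j
    using Ws[rule_format] unfolding dual_potentials_iff[of _ l] hollow_sym_def
    by (intro LIMSEQ_le_const[OF hollow_conv]) auto
  then have "hollow_part W \<in> hollow_sym"
    unfolding hollow_sym_def hollow_part_def by auto
  moreover have "W i j = (W i l + hollow_part W i l - W l l) + (W l j + hollow_part W l j) - hollow_part W i j" for i j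
  proof (rule LIMSEQ_unique[OF conv[rule_format]])
    have "Ws k i j = (Ws k i l + hollow_part (Ws k) i l - Ws k l l) + (Ws k l j + hollow_part (Ws k) l j)
        - hollow_part (Ws k) i j" for k
      using Ws[rule_format, of k] unfolding dual_potentials_iff[of _ l] by blast
    moreover have "(\<lambda>k. (Ws k i l + hollow_part (Ws k) i l - Ws k l l) + (Ws k l j + hollow_part (Ws k) l j)
        - hollow_part (Ws k) i j) \<longlonglongrightarrow> (W i l + hollow_part W i l - W l l) + (W l j + hollow_part W l j) - hollow_part W i j"
      by (intro tendsto_intros conv[rule_format] hollow_conv)
    ultimately show "(\<lambda>k. Ws k i j) \<longlonglongrightarrow> (W i l + hollow_part W i l - W l l) + (W l j + hollow_part W l j) - hollow_part W i j"
      by simp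
  qed
  ultimately show "W \<in> dual_potentials" unfolding dual_potentials_iff[of _ l] by blast
qed

lemma dual_potentials_convex:
  assumes "W \<in> dual_potentials" "W' \<in> dual_potentials" "0 \<le> t" "t \<le> 1"
  shows "(\<lambda>i j. (1 - t) * W i j + t * W' i j) \<in> dual_potentials"
proof -
  obtain u v C u' v' C' where C: "C \<in> hollow_sym" "C' \<in> hollow_sym"
    and W: "W = (\<lambda>i j. u i + v j - C i j)" "W' = (\<lambda>i j. u' i + v' j - C' i j)"
    using assms(1,2) unfolding dual_potentials_def by blast
  have "(\<lambda>i j. (1 - t) * C i j + t * C' i j) \<in> hollow_sym"
    using C assms(3,4) unfolding hollow_sym_def by auto
  then show ?thesis
    by (rule dual_potentialsI[where u = "\<lambda>i. (1 - t) * u i + t * u' i" and v = "\<lambda>j. (1 - t) * v j + t * v' j"])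
      (simp add: W fun_eq_iff algebra_simps)
qed

lemma scaled_potential_in_dual_potentials:
  assumes "gamma > 0" "C \<in> hollow_sym"
  shows "(\<lambda>i j. (u i + v j - C i j) / gamma) \<in> dual_potentials"
proof (rule dual_potentialsI[where u = "\<lambda>i. u i / gamma" and v = "\<lambda>j. v j / gamma"
      and C = "\<lambda>i j. C i j / gamma"])
  show "(\<lambda>i j. C i j / gamma) \<in> hollow_sym"
    using assms unfolding hollow_sym_def by auto
qed (simp add: fun_eq_iff diff_divide_distrib add_divide_distrib)

lemma dual_potentials_scaledE:
  assumes "gamma > 0" "W \<in> dual_potentials"
  obtains u v C where "C \<in> hollow_sym" "W = (\<lambda>i j. (u i + v j - C i j) / gamma)"
proof -
  obtain u v C where C: "C \<in> hollow_sym" and W: "W = (\<lambda>i j. u i + v j - C i j)"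
    using assms(2) unfolding dual_potentials_def by blast
  have "(\<lambda>i j. gamma * C i j) \<in> hollow_sym"
    using C assms(1) unfolding hollow_sym_def by auto
  moreover have "W = (\<lambda>i j. (gamma * u i + gamma * v j - gamma * C i j) / gamma)"
    using assms(1) unfolding W by (auto simp: fun_eq_iff field_simps)
  ultimately show thesis by (rule that)
qed

lemma dual_obj_minimizer_iff:
  fixes u v :: "'n::finite \<Rightarrow> real" and C :: "'n \<Rightarrow> 'n \<Rightarrow> real"
  assumes "gamma > 0"
  shows "(\<forall>u' v' C'. C' \<in> hollow_sym \<longrightarrow> dual_obj psi gamma Xh u v C \<le> dual_obj psi gamma Xh u' v' C') \<longleftrightarrow>
    (\<forall>W\<in>dual_potentials. reduced_dual_obj psi Xh (\<lambda>i j. (u i + v j - C i j) / gamma) \<le> reduced_dual_obj psi Xh W)"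
  unfolding dual_obj_eq_reduced_dual_obj
proof (intro iffI ballI allI impI)
  fix W :: "'n \<Rightarrow> 'n \<Rightarrow> real"
  assume H: "\<forall>u' v' C'. C' \<in> hollow_sym \<longrightarrow> reduced_dual_obj psi Xh (\<lambda>i j. (u i + v j - C i j) / gamma)
      \<le> reduced_dual_obj psi Xh (\<lambda>i j. (u' i + v' j - C' i j) / gamma)"
    and "W \<in> dual_potentials"
  then obtain u' v' C' where "C' \<in> hollow_sym" "W = (\<lambda>i j. (u' i + v' j - C' i j) / gamma)"
    using dual_potentials_scaledE[OF assms] by blast
  with H show "reduced_dual_obj psi Xh (\<lambda>i j. (u i + v j - C i j) / gamma) \<le> reduced_dual_obj psi Xh W"
    by simp
next
  fix u' v' :: "'n \<Rightarrow> real" and C' :: "'n \<Rightarrow> 'n \<Rightarrow> real"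
  assume "\<forall>W\<in>dual_potentials. reduced_dual_obj psi Xh (\<lambda>i j. (u i + v j - C i j) / gamma)
      \<le> reduced_dual_obj psi Xh W" and "C' \<in> hollow_sym"
  then show "reduced_dual_obj psi Xh (\<lambda>i j. (u i + v j - C i j) / gamma)
      \<le> reduced_dual_obj psi Xh (\<lambda>i j. (u' i + v' j - C' i j) / gamma)"
    using scaled_potential_in_dual_potentials[OF assms] by blast
qed

lemma dual_obj_attains_min:
  fixes Xh :: "'n::finite \<Rightarrow> 'n \<Rightarrow> real"
  assumes "gamma > 0" "\<forall>i j. Xh i j \<in> interior I"
  shows "\<exists>u v C. C \<in> hollow_sym \<and> (\<forall>u' v' C'. C' \<in> hollow_sym \<longrightarrow>
    dual_obj (fenchel_conj I phi) gamma Xh u v C \<le> dual_obj (fenchel_conj I phi) gamma Xh u' v' C')"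
proof -
  let ?G = "reduced_dual_obj (fenchel_conj I phi) Xh"
  have "\<exists>W\<in>dual_potentials. \<forall>Y\<in>dual_potentials. ?G W \<le> ?G Y"
    by (rule reduced_dual_obj_attains_min[OF assms(2) dual_potentials_nonempty dual_potentials_closed])
  then obtain W where W: "W \<in> dual_potentials" "\<forall>Y\<in>dual_potentials. ?G W \<le> ?G Y" by blast
  obtain u v C where "C \<in> hollow_sym" "W = (\<lambda>i j. (u i + v j - C i j) / gamma)"
    using dual_potentials_scaledE[OF assms(1) W(1)] by blast
  with W(2) have "C \<in> hollow_sym \<and> (\<forall>u' v' C'. C' \<in> hollow_sym \<longrightarrow>
      dual_obj (fenchel_conj I phi) gamma Xh u v C \<le> dual_obj (fenchel_conj I phi) gamma Xh u' v' C')"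
    unfolding dual_obj_minimizer_iff[OF assms(1)] by simp
  then show ?thesis by blast
qed

lemma dual_obj_minimizer_hollow_unique:
  fixes u v u' v' :: "'n::finite \<Rightarrow> real"
  assumes "gamma > 0" "I \<noteq> {}"
    and C: "C \<in> hollow_sym"
    and min: "\<forall>u'' v'' C''. C'' \<in> hollow_sym \<longrightarrow>
      dual_obj (fenchel_conj I phi) gamma Xh u v C \<le> dual_obj (fenchel_conj I phi) gamma Xh u'' v'' C''"
    and twice_diff: "\<forall>i j. twice_diff_pos_at (fenchel_conj I phi) ((u i + v j - C i j) / gamma)"
    and C': "C' \<in> hollow_sym"
    and min': "\<forall>u'' v'' C''. C'' \<in> hollow_sym \<longrightarrow>
      dual_obj (fenchel_conj I phi) gamma Xh u' v' C' \<le> dual_obj (fenchel_conj I phi) gamma Xh u'' v'' C''"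
  shows "C' = C"
proof -
  have "(\<lambda>i j. (u' i + v' j - C' i j) / gamma) = (\<lambda>i j. (u i + v j - C i j) / gamma)"
  proof (rule reduced_dual_obj_minimizer_unique[OF assms(2) dual_potentials_convex _ _ twice_diff])
    show "(\<lambda>i j. (u i + v j - C i j) / gamma) \<in> dual_potentials"
      by (rule scaled_potential_in_dual_potentials[OF assms(1) C])
    show "(\<lambda>i j. (u' i + v' j - C' i j) / gamma) \<in> dual_potentials"
      by (rule scaled_potential_in_dual_potentials[OF assms(1) C'])
    show "\<forall>Y\<in>dual_potentials. reduced_dual_obj (fenchel_conj I phi) Xh (\<lambda>i j. (u i + v j - C i j) / gamma)
        \<le> reduced_dual_obj (fenchel_conj I phi) Xh Y"
      using min unfolding dual_obj_minimizer_iff[OF assms(1)] .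
    show "\<forall>Y\<in>dual_potentials. reduced_dual_obj (fenchel_conj I phi) Xh (\<lambda>i j. (u' i + v' j - C' i j) / gamma)
        \<le> reduced_dual_obj (fenchel_conj I phi) Xh Y"
      using min' unfolding dual_obj_minimizer_iff[OF assms(1)] .
  qed
  then have same_potential: "(\<lambda>i j. u' i + v' j - C' i j) = (\<lambda>i j. u i + v j - C i j)"
    using assms(1) by (simp add: fun_eq_iff)
  have "C' = hollow_part (\<lambda>i j. u' i + v' j - C' i j)" using C' by (simp add: hollow_part_potential)
  also have "\<dots> = C" unfolding same_potential using C by (rule hollow_part_potential)
  finally show ?thesis .
qed

theorem proposition7:
  fixes gamma :: real and I :: "real set" and phi :: "real \<Rightarrow> real"
    and mu nu :: "'n::finite \<Rightarrow> real" and Xh :: "'n \<Rightarrow> 'n \<Rightarrow> real"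
  assumes "gamma > 0"
    and "proper_closed_convex_on I phi"
    and "prob_vector mu" and "prob_vector nu"
    and "Xh \<in> transport_plans mu nu"
    and "\<forall>i j. Xh i j \<in> interior I"
  shows "(\<exists>u v C. C \<in> hollow_sym \<and>
           (\<forall>u' v' C'. C' \<in> hollow_sym \<longrightarrow>
              dual_obj (fenchel_conj I phi) gamma Xh u v C \<le> dual_obj (fenchel_conj I phi) gamma Xh u' v' C'))
    \<and> (\<forall>u v C. C \<in> hollow_sym \<longrightarrow>
         (\<forall>u' v' C'. C' \<in> hollow_sym \<longrightarrow>
            dual_obj (fenchel_conj I phi) gamma Xh u v C \<le> dual_obj (fenchel_conj I phi) gamma Xh u' v' C') \<longrightarrow>
         (\<forall>i j. twice_diff_pos_at (fenchel_conj I phi) ((u i + v j - C i j) / gamma)) \<longrightarrow>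
         (\<forall>u' v' C'. C' \<in> hollow_sym \<longrightarrow>
            (\<forall>u'' v'' C''. C'' \<in> hollow_sym \<longrightarrow>
               dual_obj (fenchel_conj I phi) gamma Xh u' v' C' \<le> dual_obj (fenchel_conj I phi) gamma Xh u'' v'' C'')
            \<longrightarrow> C' = C))"
proof (intro conjI allI impI)
  show "\<exists>u v C. C \<in> hollow_sym \<and> (\<forall>u' v' C'. C' \<in> hollow_sym \<longrightarrow>
      dual_obj (fenchel_conj I phi) gamma Xh u v C \<le> dual_obj (fenchel_conj I phi) gamma Xh u' v' C')"
    by (rule dual_obj_attains_min[OF assms(1,6)])
next
  fix u v C u' v' C'
  assume "C \<in> hollow_sym"
    and "\<forall>u' v' C'. C' \<in> hollow_sym \<longrightarrow>
      dual_obj (fenchel_conj I phi) gamma Xh u v C \<le> dual_obj (fenchel_conj I phi) gamma Xh u' v' C'"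
    and "\<forall>i j. twice_diff_pos_at (fenchel_conj I phi) ((u i + v j - C i j) / gamma)"
    and "C' \<in> hollow_sym"
    and "\<forall>u'' v'' C''. C'' \<in> hollow_sym \<longrightarrow>
      dual_obj (fenchel_conj I phi) gamma Xh u' v' C' \<le> dual_obj (fenchel_conj I phi) gamma Xh u'' v'' C''"
  moreover have "I \<noteq> {}" using assms(2) unfolding proper_closed_convex_on_def by blast
  ultimately show "C' = C" using dual_obj_minimizer_hollow_unique[OF assms(1)] by blast
qed

end
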